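(* Let $H$ be an abelian group with a non-degenerate alternating $\mathbb{Z}$-bilinear form $\langle-,-\rangle$ (i.e. $\ker\mu=0$). Then there are isomorphisms \[ H_2(\mathbb{Q}[H])\longrightarrow H_2(\mathbb{Q}[H^{(1)}])\longrightarrow \mathbb{Q}\otimes_{\mathbb{Z}}H, \] the first being induced by the projection $\varpi^{(1)}:\mathbb{Q}[H]=\mathbb{Q}[\ker\mu]\oplus\mathbb{Q}[H^{(1)}]\to\mathbb{Q}[H^{(1)}]$.
   Context: $\mu:H\to\mathrm{Hom}_{\mathbb{Z}}(H,\mathbb{Z})$, $\mu(x)(y)=\langle x,y\rangle$; $H^{(1)}:=H\setminus\ker\mu$. $\mathbb{Q}[S]$ ($S\subset H$) is the $\mathbb{Q}$-vector space with basis symbols $[x]$, $x\in S$; $\mathbb{Q}[H]$ is a Lie algebra via $[[x],[y]]=\langle x,y\rangle[x+y]$, $\mathbb{Q}[H^{(1)}]$ is its derived subalgebra (a Lie subalgebra; it is $0$ if $H^{(1)}=\emptyset$) and $\mathbb{Q}[\ker\mu]$ its center, and $\varpi^{(1)}$ is a Lie algebra homomorphism. $H_2$ denotes Lie algebra homology with trivial coefficients $\mathbb{Q}$ (Chevalley–Eilenberg complex). *)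

theory Defs
  imports Complex_Main "HOL-Library.Function_Algebras"
begin

definition supp :: "('x \<Rightarrow> rat) \<Rightarrow> 'x set" where
  "supp g = {x. g x \<noteq> 0}"

definition bvec :: "'x \<Rightarrow> 'x \<Rightarrow> rat" where
  "bvec a = (\<lambda>z. if z = a then 1 else 0)"

text \<open>Q[S]: finitely supported functions with support in S.\<close>
definition QS :: "'x set \<Rightarrow> ('x \<Rightarrow> rat) set" where
  "QS S = {g. finite (supp g) \<and> supp g \<subseteq> S}"

definition H1 :: "('a \<Rightarrow> 'a \<Rightarrow> int) \<Rightarrow> 'a set" where
  "H1 f = {x. \<exists>y. f x y \<noteq> 0}"

text \<open>Chevalley--Eilenberg chains of the Lie algebra Q[S] (basis [x], x in S).
  The exterior square (cube) of Q[S] is modelled in the basis: an element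
  1/2 \<Sum> w(x,y) [x]\<and>[y] (resp. 1/6 \<Sum> u(x,y,z) [x]\<and>[y]\<and>[z]) corresponds to the
  finitely supported alternating coefficient function w (resp. u);
  [x]\<and>[y] corresponds to bvec (x,y) - bvec (y,x).\<close>
definition chains2 :: "'x set \<Rightarrow> ('x \<times> 'x \<Rightarrow> rat) set" where
  "chains2 S = {w. finite (supp w) \<and> supp w \<subseteq> S \<times> S \<and> (\<forall>x y. w (x, y) = - w (y, x))}"

definition chains3 :: "'x set \<Rightarrow> ('x \<times> 'x \<times> 'x \<Rightarrow> rat) set" where
  "chains3 S = {u. finite (supp u) \<and> supp u \<subseteq> S \<times> S \<times> S \<and>
     (\<forall>x y z. u (x, y, z) = - u (y, x, z) \<and> u (x, y, z) = - u (x, z, y))}"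

definition wedge2 :: "'x \<Rightarrow> 'x \<Rightarrow> ('x \<times> 'x \<Rightarrow> rat)" where
  "wedge2 a b = bvec (a, b) - bvec (b, a)"

text \<open>Lie bracket [[x],[y]] = <x,y>[x+y]; CE differentials
  d2([x]\<and>[y]) = -[[x],[y]],
  d3([x]\<and>[y]\<and>[z]) = -[[x],[y]]\<and>[z] + [[x],[z]]\<and>[y] - [[y],[z]]\<and>[x].\<close>
definition d2 :: "('a::ab_group_add \<Rightarrow> 'a \<Rightarrow> int) \<Rightarrow> ('a \<times> 'a \<Rightarrow> rat) \<Rightarrow> ('a \<Rightarrow> rat)" where
  "d2 f w = (\<lambda>c. (1/2) * (\<Sum>p\<in>supp w. w p *
      (- of_int (f (fst p) (snd p)) * bvec (fst p + snd p) c)))"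

definition d3 :: "('a::ab_group_add \<Rightarrow> 'a \<Rightarrow> int) \<Rightarrow> ('a \<times> 'a \<times> 'a \<Rightarrow> rat) \<Rightarrow> ('a \<times> 'a \<Rightarrow> rat)" where
  "d3 f u = (\<lambda>c. (1/6) * (\<Sum>p\<in>supp u. (case p of (x, y, z) \<Rightarrow> u p *
      (- of_int (f x y) * wedge2 (x + y) z c
       + of_int (f x z) * wedge2 (x + z) y c
       - of_int (f y z) * wedge2 (y + z) x c))))"

definition cycles2 :: "('a::ab_group_add \<Rightarrow> 'a \<Rightarrow> int) \<Rightarrow> 'a set \<Rightarrow> ('a \<times> 'a \<Rightarrow> rat) set" where
  "cycles2 f S = {w \<in> chains2 S. d2 f w = 0}"

definition boundaries2 :: "('a::ab_group_add \<Rightarrow> 'a \<Rightarrow> int) \<Rightarrow> 'a set \<Rightarrow> ('a \<times> 'a \<Rightarrow> rat) set" where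
  "boundaries2 f S = d3 f ` chains3 S"

text \<open>Map on exterior squares induced by the projection Q[H] \<rightarrow> Q[S] ([x] \<mapsto> [x] if x \<in> S, else 0).\<close>
definition proj2 :: "'x set \<Rightarrow> ('x \<times> 'x \<Rightarrow> rat) \<Rightarrow> ('x \<times> 'x \<Rightarrow> rat)" where
  "proj2 S w = (\<lambda>p. if p \<in> S \<times> S then w p else 0)"

text \<open>Q \<otimes>_Z H presented as Q[H] modulo the Q-span of [h+h'] - [h] - [h'].\<close>
definition tensor_rel :: "('a::ab_group_add \<Rightarrow> rat) set" where
  "tensor_rel = {g. \<exists>F c. finite F \<and>
     g = (\<Sum>p\<in>F. (\<lambda>z. c p * (bvec (fst p + snd p) z - bvec (fst p) z - bvec (snd p) z)))}"

text \<open>phi induces a Q-linear isomorphism Z/B \<rightarrow> Z'/B'.\<close>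
definition induces_iso :: "(('x \<Rightarrow> rat) \<Rightarrow> ('y \<Rightarrow> rat)) \<Rightarrow> ('x \<Rightarrow> rat) set \<Rightarrow> ('x \<Rightarrow> rat) set
    \<Rightarrow> ('y \<Rightarrow> rat) set \<Rightarrow> ('y \<Rightarrow> rat) set \<Rightarrow> bool" where
  "induces_iso \<phi> Z B Z' B' \<longleftrightarrow>
     (\<forall>x\<in>Z. \<phi> x \<in> Z') \<and> (\<forall>x\<in>B. \<phi> x \<in> B') \<and>
     (\<forall>x\<in>Z. \<forall>y\<in>Z. \<phi> (x + y) = \<phi> x + \<phi> y) \<and>
     (\<forall>x\<in>Z. \<forall>c::rat. \<phi> (\<lambda>t. c * x t) = (\<lambda>t. c * \<phi> x t)) \<and>
     (\<forall>x\<in>Z. \<phi> x \<in> B' \<longrightarrow> x \<in> B) \<and>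
     (\<forall>y\<in>Z'. \<exists>x\<in>Z. y - \<phi> x \<in> B')"

end

theory Submission
  imports Defs
begin

text \<open>Since the form is nondegenerate, \<open>H\<^sup>(\<^sup>1\<^sup>) = H - {0}\<close>. Projecting a chain onto
  the pairs of nonzero elements only drops multiples of [0]\<and>[x], and [0]\<and>[x] is a
  boundary: \<langle>y,x\<rangle>[0]\<and>[x] = d([0]\<and>[y]\<and>[x-y]). For the second isomorphism, grade
  two-chains by the weight x + y of [x]\<and>[y]. For h \<noteq> 0 the cycles of weight h are spanned
  by \<langle>v,h\<rangle>[t]\<and>[h-t] - \<langle>t,h\<rangle>[v]\<and>[h-v], and the relations d([x]\<and>[y]\<and>[z]) show
  them to be boundaries. In weight 0 the chains [c]\<and>[-c] are cycles, and the boundaries of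
  weight 0 are spanned by the elements [x+y]\<and>[-x-y] - [x]\<and>[-x] - [y]\<and>[-y]; so
  c \<mapsto> [c]\<and>[-c] identifies Q \<otimes> H with the homology.\<close>

section \<open>Finitely supported functions\<close>

lemma sum_apply: "(\<Sum>p\<in>A. G p) t = (\<Sum>p\<in>A. G p t)"
  by (induct A rule: infinite_finite_induct) auto

definition smul :: "rat \<Rightarrow> ('x \<Rightarrow> rat) \<Rightarrow> ('x \<Rightarrow> rat)" where
  "smul c w = (\<lambda>t. c * w t)"

lemma smul_apply [simp]: "smul c w t = c * w t"
  by (simp add: smul_def)

lemma smul_zero [simp]: "smul c 0 = 0" "smul 0 w = 0"
  by (auto simp: fun_eq_iff)

lemma smul_one [simp]: "smul 1 w = w"
  by (simp add: fun_eq_iff)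

lemma smul_smul [simp]: "smul c (smul d w) = smul (c * d) w"
  by (simp add: fun_eq_iff)

lemma smul_add_left: "smul (a + b) w = smul a w + smul b w"
  by (simp add: fun_eq_iff distrib_right)

lemma smul_minus_one: "smul (- 1) w = - w"
  by (simp add: fun_eq_iff)

lemma sum_smul_left: "(\<Sum>p\<in>A. smul (c p) w) = smul (\<Sum>p\<in>A. c p) w"
  by (simp add: fun_eq_iff sum_apply sum_distrib_right)

lemma supp_add: "supp (u + v) \<subseteq> supp u \<union> supp v"
  by (auto simp: supp_def)

lemma supp_smul: "supp (smul c u) \<subseteq> supp u"
  by (auto simp: supp_def)

lemma supp_bvec: "supp (bvec p) = {p}"
  by (auto simp: supp_def bvec_def)

lemma bvec_self [simp]: "bvec p p = 1"
  by (simp add: bvec_def)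

lemma bvec_other: "q \<noteq> p \<Longrightarrow> bvec p q = 0"
  by (simp add: bvec_def)

lemma sum_mult_bvec:
  assumes "finite X"
  shows "(\<Sum>x\<in>X. c x * bvec x t) = (if t \<in> X then c t else 0)"
proof -
  have "(\<Sum>x\<in>X. c x * bvec x t) = (\<Sum>x\<in>X. if x = t then c x else 0)"
    by (rule sum.cong) (auto simp: bvec_def)
  then show ?thesis using assms by (simp add: sum.delta')
qed

lemma wedge2_swap: "wedge2 b a = - wedge2 a b"
  by (auto simp: wedge2_def)

lemma wedge2_self [simp]: "wedge2 a a = 0"
  by (auto simp: wedge2_def)

lemma wedge2_nonzero: "wedge2 a b q \<noteq> 0 \<Longrightarrow> q = (a, b) \<or> q = (b, a)"
  unfolding wedge2_def using bvec_other[of q "(a, b)"] bvec_other[of q "(b, a)"] by force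

lemma finite_supp_add: "finite (supp u) \<Longrightarrow> finite (supp v) \<Longrightarrow> finite (supp (u + v))"
  using supp_add[of u v] by (auto intro: finite_subset)

lemma finite_supp_diff: "finite (supp u) \<Longrightarrow> finite (supp v) \<Longrightarrow> finite (supp (u - v))"
  using supp_add[of u "- v"] by (auto simp: supp_def intro: finite_subset)

lemma finite_supp_uminus: "finite (supp (- u)) \<longleftrightarrow> finite (supp u)"
  by (simp add: supp_def)

lemma bvec_perm3:
  "bvec (a, b, c) (y, x, z) = bvec (b, a, c) (x, y, z)"
  "bvec (a, b, c) (x, z, y) = bvec (a, c, b) (x, y, z)"
  "bvec (a, b, c) (z, y, x) = bvec (c, b, a) (x, y, z)"
  "bvec (a, b, c) (y, z, x) = bvec (c, a, b) (x, y, z)"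
  "bvec (a, b, c) (z, x, y) = bvec (b, c, a) (x, y, z)"
  by (auto simp: bvec_def)

lemma bvec_pair_zero:
  "bvec (0, x) (q1, q2) = (if q1 = 0 then bvec x q2 else 0)"
  "bvec (x, 0) (q1, q2) = (if q2 = 0 then bvec x q1 else 0)"
  by (auto simp: bvec_def)

lemma bvec_pair_opp: "bvec (p, q) (c, - c) = (if p + q = 0 then bvec p c else (0::rat))"
  for p q c :: "'a::ab_group_add"
  by (auto simp: bvec_def add_eq_0_iff)

lemma bvec_uminus: "bvec (- x) t = bvec x (- t)" for x t :: "'a::ab_group_add"
  by (auto simp: bvec_def)

section \<open>Chevalley--Eilenberg chains\<close>

definition d3_basis :: "('a::ab_group_add \<Rightarrow> 'a \<Rightarrow> int) \<Rightarrow> 'a \<times> 'a \<times> 'a \<Rightarrow> ('a \<times> 'a \<Rightarrow> rat)" where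
  "d3_basis f p = (case p of (x, y, z) \<Rightarrow>
     smul (- of_int (f x y)) (wedge2 (x + y) z) + smul (of_int (f x z)) (wedge2 (x + z) y)
     - smul (of_int (f y z)) (wedge2 (y + z) x))"

lemma d3_eq_sum:
  assumes "finite A" "supp u \<subseteq> A"
  shows "d3 f u = (\<Sum>p\<in>A. smul (u p / 6) (d3_basis f p))"
proof -
  have "d3 f u c = (1/6) * (\<Sum>p\<in>A. u p * d3_basis f p c)" for c
  proof -
    have "d3 f u c = (1/6) * (\<Sum>p\<in>supp u. u p * d3_basis f p c)"
      unfolding d3_def
      by (rule arg_cong[where f = "(*) (1/6)"], rule sum.cong) (auto simp: d3_basis_def)
    also have "\<dots> = (1/6) * (\<Sum>p\<in>A. u p * d3_basis f p c)"
      by (rule arg_cong[where f = "(*) (1/6)"], rule sum.mono_neutral_left)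
         (use assms in \<open>auto simp: supp_def\<close>)
    finally show ?thesis .
  qed
  then show ?thesis
    by (simp add: fun_eq_iff sum_apply sum_distrib_left)
qed

lemma d3_add:
  assumes "finite (supp u)" "finite (supp v)"
  shows "d3 f (u + v) = d3 f u + d3 f v"
proof -
  let ?A = "supp u \<union> supp v"
  have A: "finite ?A" "supp u \<subseteq> ?A" "supp v \<subseteq> ?A" "supp (u + v) \<subseteq> ?A"
    using assms supp_add[of u v] by auto
  show ?thesis
    unfolding d3_eq_sum[OF A(1,4)] d3_eq_sum[OF A(1,2)] d3_eq_sum[OF A(1,3)]
    by (simp add: add_divide_distrib smul_add_left sum.distrib)
qed

lemma d3_smul:
  assumes "finite (supp u)"
  shows "d3 f (smul c u) = smul c (d3 f u)"
  unfolding d3_eq_sum[OF assms order.trans[OF supp_smul order.refl]] d3_eq_sum[OF assms order.refl]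
  by (simp add: fun_eq_iff sum_apply sum_distrib_left mult_ac)

lemma d3_uminus: "finite (supp u) \<Longrightarrow> d3 f (- u) = - d3 f u"
  using d3_smul[of u f "- 1"] by (simp add: smul_minus_one)

lemma d3_diff:
  "finite (supp u) \<Longrightarrow> finite (supp v) \<Longrightarrow> d3 f (u - v) = d3 f u - d3 f v"
  using d3_add[of u "- v" f] d3_uminus[of v f] by (simp add: finite_supp_uminus)

lemma d3_bvec: "d3 f (bvec p) = smul (1/6) (d3_basis f p)"
  using d3_eq_sum[of "{p}" "bvec p" f] by (simp add: supp_bvec)

lemma chains3D:
  assumes "u \<in> chains3 S"
  shows "finite (supp u)" "supp u \<subseteq> S \<times> S \<times> S"
    and "u (y, x, z) = - u (x, y, z)" "u (x, z, y) = - u (x, y, z)"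
proof -
  have u: "finite (supp u) \<and> supp u \<subseteq> S \<times> S \<times> S \<and>
      (\<forall>x y z. u (x, y, z) = - u (y, x, z) \<and> u (x, y, z) = - u (x, z, y))"
    using assms unfolding chains3_def by (rule CollectD)
  then show "finite (supp u)" "supp u \<subseteq> S \<times> S \<times> S"
    by (rule conjunct1, rule conjunct1[OF conjunct2])
  from u have "\<forall>x y z. u (x, y, z) = - u (y, x, z) \<and> u (x, y, z) = - u (x, z, y)"
    by (elim conjE)
  then have "u (x, y, z) = - u (y, x, z) \<and> u (x, y, z) = - u (x, z, y)"
    by blast
  then show "u (y, x, z) = - u (x, y, z)" "u (x, z, y) = - u (x, y, z)"
    by linarith+
qed

lemma chains3_add:
  assumes u: "u \<in> chains3 S" and v: "v \<in> chains3 S"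
  shows "u + v \<in> chains3 S"
  unfolding chains3_def mem_Collect_eq
proof (intro conjI allI)
  show "finite (supp (u + v))" "supp (u + v) \<subseteq> S \<times> S \<times> S"
    using chains3D(1,2)[OF u] chains3D(1,2)[OF v] supp_add[of u v]
    by (auto intro: finite_subset[OF supp_add])
  fix x y z
  show "(u + v) (x, y, z) = - (u + v) (y, x, z)" "(u + v) (x, y, z) = - (u + v) (x, z, y)"
    using chains3D(3,4)[OF u, where x = x and y = y and z = z]
      chains3D(3,4)[OF v, where x = x and y = y and z = z]
    by simp_all
qed

lemma chains3_smul:
  assumes u: "u \<in> chains3 S"
  shows "smul c u \<in> chains3 S"
  unfolding chains3_def mem_Collect_eq
proof (intro conjI allI)
  show "finite (supp (smul c u))" "supp (smul c u) \<subseteq> S \<times> S \<times> S"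
    using chains3D(1,2)[OF u] supp_smul[of c u] by (auto intro: finite_subset[OF supp_smul])
  fix x y z
  show "smul c u (x, y, z) = - smul c u (y, x, z)" "smul c u (x, y, z) = - smul c u (x, z, y)"
    using chains3D(3,4)[OF u, where x = x and y = y and z = z] by simp_all
qed

lemma boundaries2_zero: "0 \<in> boundaries2 f S"
proof -
  have "(0 :: 'a \<times> 'a \<times> 'a \<Rightarrow> rat) \<in> chains3 S" "d3 f 0 = 0"
    by (auto simp: chains3_def d3_def supp_def)
  then show ?thesis unfolding boundaries2_def by force
qed

lemma boundaries2_add:
  assumes "x \<in> boundaries2 f S" "y \<in> boundaries2 f S"
  shows "x + y \<in> boundaries2 f S"
proof -
  obtain u v where u: "u \<in> chains3 S" "x = d3 f u" and v: "v \<in> chains3 S" "y = d3 f v"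
    using assms unfolding boundaries2_def by auto
  have "x + y = d3 f (u + v)"
    using u v by (simp add: d3_add chains3D(1))
  then show ?thesis
    using chains3_add[OF u(1) v(1)] unfolding boundaries2_def by (rule image_eqI)
qed

lemma boundaries2_smul:
  assumes "x \<in> boundaries2 f S"
  shows "smul c x \<in> boundaries2 f S"
proof -
  obtain u where u: "u \<in> chains3 S" "x = d3 f u"
    using assms unfolding boundaries2_def by auto
  have "smul c x = d3 f (smul c u)"
    using u(2) chains3D(1)[OF u(1)] by (simp add: d3_smul)
  then show ?thesis
    using chains3_smul[OF u(1)] unfolding boundaries2_def by (rule image_eqI)
qed

lemma boundaries2_uminus: "x \<in> boundaries2 f S \<Longrightarrow> - x \<in> boundaries2 f S"
  using boundaries2_smul[of x f S "- 1"] by (simp add: smul_minus_one)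

lemma boundaries2_diff:
  "x \<in> boundaries2 f S \<Longrightarrow> y \<in> boundaries2 f S \<Longrightarrow> x - y \<in> boundaries2 f S"
  using boundaries2_add[of x f S "- y"] boundaries2_uminus[of y f S] by simp

lemma boundaries2_sum:
  "(\<And>p. p \<in> F \<Longrightarrow> G p \<in> boundaries2 f S) \<Longrightarrow> sum G F \<in> boundaries2 f S"
  by (induct F rule: infinite_finite_induct) (auto intro: boundaries2_zero boundaries2_add)

lemma boundaries2_smul_cancel:
  "c \<noteq> 0 \<Longrightarrow> smul c x \<in> boundaries2 f S \<Longrightarrow> x \<in> boundaries2 f S"
  using boundaries2_smul[of "smul c x" f S "1 / c"] by simp

lemma boundaries2_mono: "S \<subseteq> T \<Longrightarrow> boundaries2 f S \<subseteq> boundaries2 f T"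
  unfolding boundaries2_def chains3_def by blast

lemma chains2D:
  assumes "w \<in> chains2 S"
  shows "finite (supp w)" "supp w \<subseteq> S \<times> S" "w (y, x) = - w (x, y)"
proof -
  have w: "finite (supp w) \<and> supp w \<subseteq> S \<times> S \<and> (\<forall>x y. w (x, y) = - w (y, x))"
    using assms unfolding chains2_def by (rule CollectD)
  then show "finite (supp w)" "supp w \<subseteq> S \<times> S"
    by (rule conjunct1, rule conjunct1[OF conjunct2])
  from w have "\<forall>x y. w (x, y) = - w (y, x)"
    by (elim conjE)
  then have "w (x, y) = - w (y, x)"
    by blast
  then show "w (y, x) = - w (x, y)"
    by linarith
qed

lemma chains2_diag: "w \<in> chains2 S \<Longrightarrow> w (x, x) = 0"
  using chains2D(3)[of w S x x] by simp

lemma chains2_outside: "w \<in> chains2 S \<Longrightarrow> p \<notin> S \<times> S \<Longrightarrow> w p = 0"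
  using chains2D(2)[of w S] unfolding supp_def by blast

lemma chains2I:
  assumes "finite (supp w)" "supp w \<subseteq> S \<times> S" "\<And>x y. w (y, x) = - w (x, y)"
  shows "w \<in> chains2 S"
  unfolding chains2_def mem_Collect_eq
proof (intro conjI allI)
  fix x y
  show "w (x, y) = - w (y, x)" using assms(3)[of y x] by linarith
qed (fact assms)+

lemma chains2_mono: "S \<subseteq> T \<Longrightarrow> chains2 S \<subseteq> chains2 T"
  by (auto intro!: chains2I dest: chains2D)

lemma cycles2_mono: "S \<subseteq> T \<Longrightarrow> cycles2 f S \<subseteq> cycles2 f T"
  unfolding cycles2_def using chains2_mono by blast

lemma d2_eq_sum:
  assumes "finite A" "supp w \<subseteq> A"
  shows "d2 f w = (\<lambda>c. (1/2) * (\<Sum>p\<in>A. w p * (- of_int (f (fst p) (snd p)) * bvec (fst p + snd p) c)))"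
  unfolding d2_def
  by (rule ext, rule arg_cong[where f = "\<lambda>x. (1/2) * x"], rule sum.mono_neutral_left)
     (use assms in \<open>auto simp: supp_def\<close>)

lemma d2_restrict:
  assumes "finite (supp w)" and "\<And>p. p \<in> supp w \<Longrightarrow> \<not> P p \<Longrightarrow> f (fst p) (snd p) = 0"
  shows "d2 f (\<lambda>p. if P p then w p else 0) = d2 f w"
proof -
  have sub: "supp (\<lambda>p. if P p then w p else 0) \<subseteq> supp w"
    by (auto simp: supp_def)
  show ?thesis
    unfolding d2_eq_sum[OF assms(1) sub] d2_eq_sum[OF assms(1) order.refl]
    by (rule ext, rule arg_cong[where f = "\<lambda>x. (1/2) * x"], rule sum.cong) (auto simp: assms(2))
qed

lemma chains2_restrict:
  assumes w: "w \<in> chains2 S" and P: "\<And>x y. P (y, x) = P (x, y)"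
  shows "(\<lambda>p. if P p then w p else 0) \<in> chains2 S"
proof (rule chains2I)
  have sub: "supp (\<lambda>p. if P p then w p else 0) \<subseteq> supp w"
    by (auto simp: supp_def)
  then show "finite (supp (\<lambda>p. if P p then w p else 0))"
    using chains2D(1)[OF w] by (rule finite_subset)
  show "supp (\<lambda>p. if P p then w p else 0) \<subseteq> S \<times> S"
    using sub chains2D(2)[OF w] by blast
  fix x y
  show "(if P (y, x) then w (y, x) else 0) = - (if P (x, y) then w (x, y) else 0)"
    using chains2D(3)[OF w, of y x] P[of x y] by simp
qed

lemma chains2_eq_sum_wedge2:
  assumes w: "w \<in> chains2 S"
  shows "w = (\<Sum>p\<in>supp w. smul (w p / 2) (wedge2 (fst p) (snd p)))"
proof
  fix q :: "'a \<times> 'a"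
  have fin: "finite (supp w)" by (rule chains2D(1)[OF w])
  have swap: "w (snd q, fst q) = - w q"
    using chains2D(3)[OF w, of "snd q" "fst q"] by simp
  then have swap_supp: "(snd q, fst q) \<in> supp w \<longleftrightarrow> q \<in> supp w"
    by (simp add: supp_def)
  have "(\<Sum>p\<in>supp w. smul (w p / 2) (wedge2 (fst p) (snd p))) q
      = (\<Sum>p\<in>supp w. w p / 2 * bvec p q) - (\<Sum>p\<in>supp w. w p / 2 * bvec p (snd q, fst q))"
    by (simp add: sum_apply wedge2_def bvec_def prod_eq_iff algebra_simps sum_subtractf
        conj_commute eq_commute[of "fst q"] eq_commute[of "snd q"])
  also have "\<dots> = w q"
    unfolding sum_mult_bvec[OF fin] swap_supp swap by (simp add: supp_def)
  finally show "w q = (\<Sum>p\<in>supp w. smul (w p / 2) (wedge2 (fst p) (snd p))) q" ..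
qed

text \<open>Grouping the pairs by their weight: the inner sums are the coefficients of d2 f w.\<close>
lemma cycle_weighted_sum_zero:
  assumes fin: "finite (supp w)" and cycle: "d2 f w = 0"
  shows "(\<Sum>p\<in>supp w. smul (w p * of_int (f (fst p) (snd p))) (V (fst p + snd p))) = 0"
proof -
  let ?s = "\<lambda>p. fst p + snd p"
  have coeff: "(\<Sum>p\<in>{p \<in> supp w. ?s p = h}. w p * of_int (f (fst p) (snd p))) = 0" for h
  proof -
    have "d2 f w h = - (1/2) * (\<Sum>p\<in>{p \<in> supp w. ?s p = h}. w p * of_int (f (fst p) (snd p)))"
      unfolding d2_def
      by (simp add: sum.inter_filter[OF fin] bvec_def sum_negf[symmetric] eq_commute[of h]
          if_distrib[of "(*) _"] if_distrib[of uminus] cong: if_cong)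
    then show ?thesis using cycle by simp
  qed
  have "(\<Sum>p\<in>supp w. smul (w p * of_int (f (fst p) (snd p))) (V (?s p)))
      = (\<Sum>h\<in>?s ` supp w. \<Sum>p\<in>{p \<in> supp w. ?s p = h}. smul (w p * of_int (f (fst p) (snd p))) (V (?s p)))"
    by (rule sum.group[symmetric]) (use fin in auto)
  also have "\<dots> = (\<Sum>h\<in>?s ` supp w. \<Sum>p\<in>{p \<in> supp w. ?s p = h}. smul (w p * of_int (f (fst p) (snd p))) (V h))"
    by (intro sum.cong) auto
  also have "\<dots> = 0"
    by (simp add: sum_smul_left coeff)
  finally show ?thesis .
qed

section \<open>Alternating bilinear forms\<close>

locale alternating_form =
  fixes f :: "'a::ab_group_add \<Rightarrow> 'a \<Rightarrow> int"
  assumes bilinear_left [simp]: "f (x + y) z = f x z + f y z"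
    and bilinear_right [simp]: "f x (y + z) = f x y + f x z"
    and alternating [simp]: "f x x = 0"
begin

lemma zero_left [simp]: "f 0 y = 0"
  using bilinear_left[of 0 0 y] by simp

lemma zero_right [simp]: "f x 0 = 0"
  using bilinear_right[of x 0 0] by simp

lemma minus_left [simp]: "f (- x) y = - f x y"
  using bilinear_left[of x "- x" y] by simp

lemma minus_right [simp]: "f x (- y) = - f x y"
  using bilinear_right[of x y "- y"] by simp

lemma diff_left [simp]: "f (x - y) z = f x z - f y z"
  using bilinear_left[of x "- y" z] by simp

lemma diff_right [simp]: "f x (y - z) = f x y - f x z"
  using bilinear_right[of x y "- z"] by simp

lemma skew: "f y x = - f x y"
  using alternating[of "x + y"] bilinear_left[of x y "x + y"] by simp

lemma d3_basis_swap12: "d3_basis f (b, a, c) = - d3_basis f (a, b, c)"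
  unfolding d3_basis_def by (simp add: fun_eq_iff add.commute[of b a] skew[of a b] algebra_simps)

lemma d3_basis_swap23: "d3_basis f (a, c, b) = - d3_basis f (a, b, c)"
  unfolding d3_basis_def by (simp add: fun_eq_iff add.commute[of c b] skew[of b c] algebra_simps)

lemma d3_basis_in_boundaries2:
  assumes "a \<in> S" "b \<in> S" "c \<in> S"
  shows "d3_basis f (a, b, c) \<in> boundaries2 f S"
proof -
  let ?e = "bvec (a, b, c)"
  define u where "u = (\<lambda>(x, y, z). ?e (x, y, z) - ?e (y, x, z) - ?e (x, z, y) - ?e (z, y, x)
    + ?e (y, z, x) + ?e (z, x, y))"
  have u_eq: "u = bvec (a, b, c) - bvec (b, a, c) - bvec (a, c, b) - bvec (c, b, a)
      + bvec (c, a, b) + bvec (b, c, a)"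
    unfolding u_def by (auto simp: fun_eq_iff bvec_perm3 split: prod.split)
  have supp_u: "supp u \<subseteq> {(a, b, c), (b, a, c), (a, c, b), (c, b, a), (c, a, b), (b, c, a)}"
  proof
    fix q assume q: "q \<in> supp u"
    show "q \<in> {(a, b, c), (b, a, c), (a, c, b), (c, b, a), (c, a, b), (b, c, a)}"
    proof (rule ccontr)
      assume "q \<notin> {(a, b, c), (b, a, c), (a, c, b), (c, b, a), (c, a, b), (b, c, a)}"
      then have "u q = 0" unfolding u_eq by (simp add: bvec_def)
      with q show False by (simp add: supp_def)
    qed
  qed
  have "u \<in> chains3 S"
    unfolding chains3_def mem_Collect_eq
  proof (intro conjI allI)
    show "finite (supp u)" by (rule finite_subset[OF supp_u]) simp
    show "supp u \<subseteq> S \<times> S \<times> S" using supp_u assms by auto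
    fix x y z
    show "u (x, y, z) = - u (y, x, z)" "u (x, y, z) = - u (x, z, y)"
      by (simp_all add: u_def)
  qed
  moreover have "d3 f u = d3_basis f (a, b, c)"
  proof -
    have fin: "finite (supp (bvec p))" for p :: "'a \<times> 'a \<times> 'a"
      by (simp add: supp_bvec)
    have "d3 f u = smul (1/6) (d3_basis f (a, b, c)) - smul (1/6) (d3_basis f (b, a, c))
        - smul (1/6) (d3_basis f (a, c, b)) - smul (1/6) (d3_basis f (c, b, a))
        + smul (1/6) (d3_basis f (c, a, b)) + smul (1/6) (d3_basis f (b, c, a))"
      unfolding u_eq by (simp add: d3_add d3_diff d3_bvec fin finite_supp_add finite_supp_diff)
    also have "\<dots> = d3_basis f (a, b, c)"
      using d3_basis_swap12[of a b c] d3_basis_swap23[of a b c] d3_basis_swap12[of b c a]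
        d3_basis_swap23[of b a c] d3_basis_swap12[of a c b]
      by (simp add: fun_eq_iff)
    finally show ?thesis .
  qed
  ultimately show ?thesis
    unfolding boundaries2_def by (metis image_eqI)
qed

end

section \<open>The projection onto \<open>H\<^sup>(\<^sup>1\<^sup>)\<close>\<close>

lemma proj2_add: "proj2 S (u + v) = proj2 S u + proj2 S v"
  and proj2_diff: "proj2 S (u - v) = proj2 S u - proj2 S v"
  and proj2_smul: "proj2 S (smul c u) = smul c (proj2 S u)"
  by (simp_all add: proj2_def fun_eq_iff)

lemma proj2_wedge2: "proj2 S (wedge2 a b) = (if a \<in> S \<and> b \<in> S then wedge2 a b else 0)"
proof (rule ext)
  fix q
  show "proj2 S (wedge2 a b) q = (if a \<in> S \<and> b \<in> S then wedge2 a b else 0) q"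
  proof (cases "wedge2 a b q = 0")
    case False
    then have "q = (a, b) \<or> q = (b, a)" by (rule wedge2_nonzero)
    then show ?thesis unfolding proj2_def by auto
  qed (simp add: proj2_def)
qed

lemma proj2_chains2:
  assumes "w \<in> chains2 T"
  shows "proj2 S w \<in> chains2 S"
proof (rule chains2I)
  have "supp (proj2 S w) \<subseteq> supp w"
    by (auto simp: supp_def proj2_def)
  then show "finite (supp (proj2 S w))"
    using chains2D(1)[OF assms] by (rule finite_subset)
  show "supp (proj2 S w) \<subseteq> S \<times> S"
    by (auto simp: supp_def proj2_def)
  fix x y
  show "proj2 S w (y, x) = - proj2 S w (x, y)"
    using chains2D(3)[OF assms, of y x] by (auto simp: proj2_def)
qed

lemma proj2_eq_self: "w \<in> chains2 S \<Longrightarrow> proj2 S w = w"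
  unfolding proj2_def using chains2_outside[of w S] by (auto simp: fun_eq_iff)

lemma (in alternating_form) d2_proj2:
  assumes "finite (supp w)"
  shows "d2 f (proj2 (H1 f) w) = d2 f w"
  unfolding proj2_def
proof (rule d2_restrict[OF assms])
  fix p :: "'a \<times> 'a"
  assume "p \<notin> H1 f \<times> H1 f"
  then show "f (fst p) (snd p) = 0"
    using skew[of "fst p" "snd p"] unfolding H1_def by (auto simp: mem_Times_iff)
qed

lemma (in alternating_form) proj2_cycles2:
  "w \<in> cycles2 f T \<Longrightarrow> proj2 (H1 f) w \<in> cycles2 f (H1 f)"
  unfolding cycles2_def using proj2_chains2 d2_proj2[OF chains2D(1)] by auto

locale nondegenerate_form = alternating_form +
  assumes nondegenerate: "(\<And>y. f x y = 0) \<Longrightarrow> x = 0"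
begin

lemma mem_H1_iff [simp]: "x \<in> H1 f \<longleftrightarrow> x \<noteq> 0"
  unfolding H1_def using nondegenerate by force

lemma exists_pairing_nonzero: "x \<noteq> 0 \<Longrightarrow> \<exists>y. f y x \<noteq> 0"
  using nondegenerate[of x] skew[of x] by force

lemma proj2_d3_basis:
  "proj2 (H1 f) (d3_basis f (a, b, c))
     = (if a \<noteq> 0 \<and> b \<noteq> 0 \<and> c \<noteq> 0 then d3_basis f (a, b, c) else 0)"
proof -
  have "f a b = 0" if "a + b = 0" using that by (simp add: add_eq_0_iff)
  moreover have "f a c = 0" if "a + c = 0" using that by (simp add: add_eq_0_iff)
  moreover have "f b c = 0" if "b + c = 0" using that by (simp add: add_eq_0_iff)
  ultimately show ?thesis
    unfolding d3_basis_def prod.case proj2_add proj2_diff proj2_smul proj2_wedge2 mem_H1_iff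
    by auto
qed

lemma proj2_boundaries2:
  assumes "x \<in> boundaries2 f UNIV"
  shows "proj2 (H1 f) x \<in> boundaries2 f (H1 f)"
proof -
  obtain u where u: "x = d3 f u" "finite (supp u)"
    using assms unfolding boundaries2_def by (auto dest: chains3D(1))
  have "proj2 (H1 f) x = (\<Sum>p\<in>supp u. smul (u p / 6) (proj2 (H1 f) (d3_basis f p)))"
    unfolding u d3_eq_sum[OF u(2) order.refl] by (simp add: fun_eq_iff sum_apply proj2_def)
  also have "\<dots> \<in> boundaries2 f (H1 f)"
  proof (rule boundaries2_sum, rule boundaries2_smul)
    fix p :: "'a \<times> 'a \<times> 'a"
    obtain a b c where "p = (a, b, c)" by (cases p)
    then show "proj2 (H1 f) (d3_basis f p) \<in> boundaries2 f (H1 f)"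
      using d3_basis_in_boundaries2[of a "H1 f" b c] boundaries2_zero[of f "H1 f"]
      by (simp add: proj2_d3_basis)
  qed
  finally show ?thesis .
qed

lemma wedge2_zero_in_boundaries2: "wedge2 0 x \<in> boundaries2 f UNIV"
proof (cases "x = 0")
  case False
  then obtain y where y: "f y x \<noteq> 0" using exists_pairing_nonzero by blast
  have "d3_basis f (0, y, x - y) = smul (of_int (f y x)) (wedge2 0 x)"
    unfolding d3_basis_def by (simp add: wedge2_swap[of x 0] fun_eq_iff)
  then have "smul (of_int (f y x)) (wedge2 0 x) \<in> boundaries2 f UNIV"
    using d3_basis_in_boundaries2[of 0 UNIV y "x - y"] by simp
  then show ?thesis
    by (rule boundaries2_smul_cancel[rotated]) (use y in simp)
qed (simp add: boundaries2_zero)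

text \<open>A chain differs from its projection by a combination of the boundaries [0]\<and>[x].\<close>
lemma boundaries2_if_proj2_boundaries2:
  assumes w: "w \<in> chains2 UNIV" and pw: "proj2 (H1 f) w \<in> boundaries2 f (H1 f)"
  shows "w \<in> boundaries2 f UNIV"
proof -
  let ?X = "Pair 0 -` supp w"
  have finX: "finite ?X"
    using chains2D(1)[OF w] by (rule finite_vimageI) (simp add: inj_on_def)
  let ?r = "\<Sum>x\<in>?X. smul (w (0, x)) (wedge2 0 x)"
  have r_eq: "w q - proj2 (H1 f) w q = ?r q" for q
  proof -
    obtain q1 q2 where q: "q = (q1, q2)" by (cases q)
    have "?r q = (\<Sum>x\<in>?X. w (0, x) * bvec (0, x) q) - (\<Sum>x\<in>?X. w (0, x) * bvec (x, 0) q)"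
      by (simp add: sum_apply wedge2_def algebra_simps sum_subtractf)
    also have "\<dots> = (if q1 = 0 then w (0, q2) else 0) - (if q2 = 0 then w (0, q1) else 0)"
      unfolding q bvec_pair_zero if_distrib[of "(*) _"] mult_zero_right
      using sum_mult_bvec[OF finX, of "\<lambda>x. w (0, x)" q1] sum_mult_bvec[OF finX, of "\<lambda>x. w (0, x)" q2]
      by (auto simp: supp_def)
    also have "\<dots> = w q - proj2 (H1 f) w q"
      using chains2D(3)[OF w, of 0 q1] chains2_diag[OF w, of 0]
      by (auto simp: q proj2_def)
    finally show ?thesis by simp
  qed
  have "w = proj2 (H1 f) w + ?r"
  proof
    fix q
    show "w q = (proj2 (H1 f) w + ?r) q" using r_eq[of q] by simp
  qed
  moreover have "proj2 (H1 f) w \<in> boundaries2 f UNIV"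
    using pw boundaries2_mono[of "H1 f" UNIV f] by blast
  moreover have "?r \<in> boundaries2 f UNIV"
    by (rule boundaries2_sum, rule boundaries2_smul, rule wedge2_zero_in_boundaries2)
  ultimately show ?thesis
    using boundaries2_add by metis
qed

lemma proj2_induces_iso:
  "induces_iso (proj2 (H1 f)) (cycles2 f UNIV) (boundaries2 f UNIV)
     (cycles2 f (H1 f)) (boundaries2 f (H1 f))"
  unfolding induces_iso_def
proof (intro conjI ballI allI impI)
  fix y assume y: "y \<in> cycles2 f (H1 f)"
  then have "y \<in> cycles2 f UNIV" "proj2 (H1 f) y = y"
    using cycles2_mono[of "H1 f" UNIV f] proj2_eq_self[of y "H1 f"]
    by (auto simp: cycles2_def)
  then show "\<exists>x\<in>cycles2 f UNIV. y - proj2 (H1 f) x \<in> boundaries2 f (H1 f)"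
    using boundaries2_zero[of f "H1 f"] by force
next
  fix x assume "x \<in> cycles2 f UNIV" "proj2 (H1 f) x \<in> boundaries2 f (H1 f)"
  then show "x \<in> boundaries2 f UNIV"
    unfolding cycles2_def by (blast intro: boundaries2_if_proj2_boundaries2)
qed (simp_all add: proj2_cycles2 proj2_boundaries2 proj2_add, simp add: proj2_def fun_eq_iff)

end

section \<open>The tensor product and the diagonal coefficients\<close>

definition tensor_gen :: "'a::ab_group_add \<times> 'a \<Rightarrow> ('a \<Rightarrow> rat)" where
  "tensor_gen p = bvec (fst p + snd p) - bvec (fst p) - bvec (snd p)"

lemma tensor_rel_iff:
  "g \<in> tensor_rel \<longleftrightarrow> (\<exists>F c. finite F \<and> g = (\<Sum>p\<in>F. smul (c p) (tensor_gen p)))"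
proof -
  have "(\<lambda>z. c p * (bvec (fst p + snd p) z - bvec (fst p) z - bvec (snd p) z))
      = smul (c p) (tensor_gen p)" for c :: "'a \<times> 'a \<Rightarrow> rat" and p
    by (simp add: tensor_gen_def fun_eq_iff)
  then show ?thesis
    unfolding tensor_rel_def by simp
qed

lemma tensor_rel_smul_gen: "smul c (tensor_gen p) \<in> tensor_rel"
  unfolding tensor_rel_iff by (rule exI[of _ "{p}"], rule exI[of _ "\<lambda>_. c"]) simp

lemma tensor_gen_in_tensor_rel: "tensor_gen p \<in> tensor_rel"
  using tensor_rel_smul_gen[of 1 p] by simp

lemma tensor_rel_zero: "0 \<in> tensor_rel"
  unfolding tensor_rel_iff by (rule exI[of _ "{}"]) simp

lemma tensor_rel_add:
  assumes "g1 \<in> tensor_rel" "g2 \<in> tensor_rel"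
  shows "g1 + g2 \<in> tensor_rel"
proof -
  obtain F1 c1 where F1: "finite F1" "g1 = (\<Sum>p\<in>F1. smul (c1 p) (tensor_gen p))"
    using assms(1) unfolding tensor_rel_iff by blast
  obtain F2 c2 where F2: "finite F2" "g2 = (\<Sum>p\<in>F2. smul (c2 p) (tensor_gen p))"
    using assms(2) unfolding tensor_rel_iff by blast
  let ?F = "F1 \<union> F2"
  let ?c = "\<lambda>p. (if p \<in> F1 then c1 p else 0) + (if p \<in> F2 then c2 p else 0)"
  have fin: "finite ?F" using F1 F2 by simp
  have "g1 = (\<Sum>p\<in>?F. smul (if p \<in> F1 then c1 p else 0) (tensor_gen p))"
    unfolding F1(2) by (rule sum.mono_neutral_cong_left) (use fin in auto)
  moreover have "g2 = (\<Sum>p\<in>?F. smul (if p \<in> F2 then c2 p else 0) (tensor_gen p))"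
    unfolding F2(2) by (rule sum.mono_neutral_cong_left) (use fin in auto)
  ultimately have eq: "g1 + g2 = (\<Sum>p\<in>?F. smul (?c p) (tensor_gen p))"
    by (simp add: smul_add_left sum.distrib)
  show ?thesis
    unfolding tensor_rel_iff by (rule exI[of _ ?F], rule exI[of _ ?c], rule conjI[OF fin eq])
qed

lemma tensor_rel_smul:
  assumes "g \<in> tensor_rel"
  shows "smul c g \<in> tensor_rel"
proof -
  obtain F d where F: "finite F" "g = (\<Sum>p\<in>F. smul (d p) (tensor_gen p))"
    using assms unfolding tensor_rel_iff by blast
  then have eq: "smul c g = (\<Sum>p\<in>F. smul (c * d p) (tensor_gen p))"
    by (simp add: fun_eq_iff sum_apply sum_distrib_left mult.assoc)
  show ?thesis
    unfolding tensor_rel_iff by (rule exI[of _ F], rule exI, rule conjI[OF F(1) eq])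
qed

lemma tensor_rel_uminus: "g \<in> tensor_rel \<Longrightarrow> - g \<in> tensor_rel"
  using tensor_rel_smul[of g "- 1"] by (simp add: smul_minus_one)

lemma tensor_rel_diff: "g1 \<in> tensor_rel \<Longrightarrow> g2 \<in> tensor_rel \<Longrightarrow> g1 - g2 \<in> tensor_rel"
  using tensor_rel_add[of g1 "- g2"] tensor_rel_uminus[of g2] by simp

lemma tensor_rel_sum: "(\<And>p. p \<in> F \<Longrightarrow> G p \<in> tensor_rel) \<Longrightarrow> sum G F \<in> tensor_rel"
  by (induct F rule: infinite_finite_induct) (auto intro: tensor_rel_zero tensor_rel_add)

text \<open>The isomorphism onto Q \<otimes> H reads off the coefficients of a cycle on the elements
  [c]\<and>[-c]; \<open>diag_chain\<close> is its inverse modulo boundaries.\<close>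
definition diag_coeff :: "('a::ab_group_add \<times> 'a \<Rightarrow> rat) \<Rightarrow> ('a \<Rightarrow> rat)" where
  "diag_coeff w = (\<lambda>c. w (c, - c))"

definition diag_chain :: "('a::ab_group_add \<Rightarrow> rat) \<Rightarrow> ('a \<times> 'a \<Rightarrow> rat)" where
  "diag_chain g = (\<lambda>q. if fst q + snd q = 0 then (g (fst q) - g (snd q)) / 2 else 0)"

definition opp_wedge :: "'a::ab_group_add \<Rightarrow> ('a \<times> 'a \<Rightarrow> rat)" where
  "opp_wedge x = wedge2 x (- x)"

lemma opp_wedge_zero [simp]: "opp_wedge 0 = 0"
  by (simp add: opp_wedge_def)

lemma opp_wedge_uminus: "opp_wedge (- x) = - opp_wedge x"
  by (simp add: opp_wedge_def wedge2_swap[of "- x" x])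

lemma diag_coeff_add: "diag_coeff (u + v) = diag_coeff u + diag_coeff v"
  and diag_coeff_diff: "diag_coeff (u - v) = diag_coeff u - diag_coeff v"
  and diag_coeff_smul: "diag_coeff (smul c u) = smul c (diag_coeff u)"
  by (simp_all add: diag_coeff_def fun_eq_iff)

lemma diag_coeff_wedge2:
  "diag_coeff (wedge2 p q) = (if p + q = 0 then bvec p - bvec q else 0)"
  by (auto simp: diag_coeff_def wedge2_def bvec_pair_opp fun_eq_iff add.commute[of q p])

lemma diag_chain_add: "diag_chain (u + v) = diag_chain u + diag_chain v"
  and diag_chain_diff: "diag_chain (u - v) = diag_chain u - diag_chain v"
  and diag_chain_smul: "diag_chain (smul c u) = smul c (diag_chain u)"
  by (simp_all add: diag_chain_def fun_eq_iff add_divide_distrib diff_divide_distrib algebra_simps)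

lemma diag_chain_zero: "diag_chain 0 = 0"
  by (simp add: diag_chain_def fun_eq_iff)

lemma diag_chain_sum: "diag_chain (sum G F) = (\<Sum>p\<in>F. diag_chain (G p))"
proof (induct F rule: infinite_finite_induct)
  case (infinite A)
  show ?case by (simp only: sum.infinite[OF infinite] diag_chain_zero)
next
  case (insert x F)
  have "diag_chain (sum G (insert x F)) = diag_chain (G x) + diag_chain (sum G F)"
    by (simp only: sum.insert[OF insert(1,2)] diag_chain_add)
  also have "\<dots> = (\<Sum>p\<in>insert x F. diag_chain (G p))"
    by (simp only: insert(3) sum.insert[OF insert(1,2)])
  finally show ?case .
qed (simp only: sum.empty diag_chain_zero)

lemma diag_chain_bvec: "diag_chain (bvec x) = smul (1/2) (opp_wedge x)"
proof (rule ext)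
  fix q :: "'a \<times> 'a"
  obtain a b where q: "q = (a, b)" by (cases q)
  show "diag_chain (bvec x) q = smul (1/2) (opp_wedge x) q"
  proof (cases "a + b = 0")
    case True
    then have "b = - a" by (simp add: add_eq_0_iff)
    then show ?thesis
      by (auto simp: q diag_chain_def opp_wedge_def wedge2_def bvec_def)
  next
    case False
    then have "opp_wedge x (a, b) = 0"
      using wedge2_nonzero[of x "- x" "(a, b)"] unfolding opp_wedge_def by force
    with False show ?thesis by (simp add: q diag_chain_def)
  qed
qed

lemma diag_chain_tensor_gen:
  "diag_chain (tensor_gen p) = smul (1/2) (opp_wedge (fst p + snd p) - opp_wedge (fst p) - opp_wedge (snd p))"
  unfolding tensor_gen_def diag_chain_diff diag_chain_bvec by (simp add: fun_eq_iff algebra_simps)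

lemma diag_chain_diag_coeff:
  assumes "w \<in> chains2 S"
  shows "diag_chain (diag_coeff w) = (\<lambda>q. if fst q + snd q = 0 then w q else 0)"
proof (rule ext)
  fix q :: "'a \<times> 'a"
  obtain a b where q: "q = (a, b)" by (cases q)
  show "diag_chain (diag_coeff w) q = (if fst q + snd q = 0 then w q else 0)"
  proof (cases "a + b = 0")
    case True
    then have "b = - a" by (simp add: add_eq_0_iff)
    then show ?thesis
      using chains2D(3)[OF assms, of "- a" a] by (simp add: q diag_chain_def diag_coeff_def)
  qed (simp add: q diag_chain_def)
qed

lemma diag_coeff_chains2: "w \<in> chains2 S \<Longrightarrow> diag_coeff w \<in> QS UNIV"
proof -
  assume w: "w \<in> chains2 S"
  have "supp (diag_coeff w) \<subseteq> fst ` supp w"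
    by (force simp: supp_def diag_coeff_def)
  then show ?thesis
    unfolding QS_def using chains2D(1)[OF w] by (auto intro: finite_subset)
qed

lemma diag_coeff_diag_chain:
  assumes g: "g \<in> QS UNIV"
  shows "g - diag_coeff (diag_chain g) \<in> tensor_rel"
proof -
  have fin: "finite (supp g)" using g unfolding QS_def by blast
  have "g t - diag_coeff (diag_chain g) t = (\<Sum>x\<in>supp g. smul (g x / 2) (bvec x + bvec (- x))) t" for t
  proof -
    have "(\<Sum>x\<in>supp g. smul (g x / 2) (bvec x + bvec (- x))) t
        = (\<Sum>x\<in>supp g. g x / 2 * bvec x t) + (\<Sum>x\<in>supp g. g x / 2 * bvec x (- t))"
      by (simp add: sum_apply bvec_uminus distrib_left sum.distrib)
    also have "\<dots> = g t / 2 + g (- t) / 2"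
      unfolding sum_mult_bvec[OF fin] by (simp add: supp_def)
    finally show ?thesis
      by (simp add: diag_coeff_def diag_chain_def field_simps)
  qed
  then have eq: "g - diag_coeff (diag_chain g) = (\<Sum>x\<in>supp g. smul (g x / 2) (bvec x + bvec (- x)))"
    by (simp add: fun_eq_iff)
  have "bvec x + bvec (- x) = - tensor_gen (x, - x) - tensor_gen (0, 0)" for x :: 'a
    by (simp add: tensor_gen_def fun_eq_iff)
  then show ?thesis unfolding eq
    by (auto intro!: tensor_rel_sum tensor_rel_smul tensor_rel_diff tensor_rel_uminus
        tensor_gen_in_tensor_rel)
qed

section \<open>Cycles of a fixed weight\<close>

definition weight_wedge :: "'a::ab_group_add \<Rightarrow> 'a \<Rightarrow> ('a \<times> 'a \<Rightarrow> rat)" where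
  "weight_wedge h t = wedge2 t (h - t)"

text \<open>Since the differential sends [t]\<and>[h-t] to -\<langle>t,h\<rangle>[h], these combinations are cycles;
  for \<langle>v,h\<rangle> \<noteq> 0 they span all cycles of weight h.\<close>
definition weight_cycle :: "('a::ab_group_add \<Rightarrow> 'a \<Rightarrow> int) \<Rightarrow> 'a \<Rightarrow> 'a \<Rightarrow> 'a \<Rightarrow> ('a \<times> 'a \<Rightarrow> rat)" where
  "weight_cycle f h v t =
     smul (of_int (f v h)) (weight_wedge h t) - smul (of_int (f t h)) (weight_wedge h v)"

lemma weight_wedge_zero: "weight_wedge 0 t = opp_wedge t"
  by (simp add: weight_wedge_def opp_wedge_def)

lemma weight_wedge_anti: "weight_wedge h (h - t) = - weight_wedge h t"
  unfolding weight_wedge_def by (simp add: wedge2_swap[of "h - t" t])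

lemma weight_cycle_self [simp]: "weight_cycle f h v v = 0"
  by (simp add: weight_cycle_def)

lemma weight_wedge_decompose:
  assumes "f u h \<noteq> 0"
  shows "weight_wedge h t = smul (1 / of_int (f u h)) (weight_cycle f h u t)
    + smul (of_int (f t h) / of_int (f u h)) (weight_wedge h u)"
  using assms by (simp add: weight_cycle_def fun_eq_iff field_simps)

context alternating_form
begin

lemma d3_basis_weight:
  assumes "x + y + z = h"
  shows "d3_basis f (x, y, z) = smul (of_int (f y z)) (weight_wedge h x)
    + smul (of_int (f z x)) (weight_wedge h y) + smul (of_int (f x y)) (weight_wedge h z)"
proof -
  have "h - z = x + y" "h - y = x + z" "h - x = y + z"
    using assms by (auto simp: algebra_simps)
  then show ?thesis
    unfolding d3_basis_def weight_wedge_def prod.case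
    by (simp add: wedge2_swap[of "x + y" z] wedge2_swap[of "x + z" y] wedge2_swap[of "y + z" x]
        skew[of z x] fun_eq_iff algebra_simps)
qed

lemma cyclic_identity:
  assumes "x + y + z = h"
  shows "f y z * f x h + f z x * f y h + f x y * f z h = 0"
  unfolding assms[symmetric] by (simp add: skew[of x z] skew[of y x] skew[of z y] algebra_simps)

lemma weight_cycle_anti: "weight_cycle f h v (h - t) = - weight_cycle f h v t"
  unfolding weight_cycle_def weight_wedge_anti by (simp add: fun_eq_iff)

lemma weight_cycle_cyclic:
  assumes h: "x + y + z = h" and S: "x \<in> S" "y \<in> S" "z \<in> S"
  shows "smul (of_int (f y z)) (weight_cycle f h v x) + smul (of_int (f z x)) (weight_cycle f h v y)
       + smul (of_int (f x y)) (weight_cycle f h v z) \<in> boundaries2 f S"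
proof -
  have "smul (of_int (f y z)) (weight_cycle f h v x) + smul (of_int (f z x)) (weight_cycle f h v y)
       + smul (of_int (f x y)) (weight_cycle f h v z)
      = smul (of_int (f v h)) (d3_basis f (x, y, z))
        - smul (of_int (f y z * f x h + f z x * f y h + f x y * f z h)) (weight_wedge h v)"
    unfolding d3_basis_weight[OF h] weight_cycle_def by (simp add: fun_eq_iff algebra_simps)
  also have "\<dots> = smul (of_int (f v h)) (d3_basis f (x, y, z))"
    by (simp add: cyclic_identity[OF h])
  finally show ?thesis
    using S by (simp add: boundaries2_smul d3_basis_in_boundaries2)
qed

lemma diag_coeff_d3_basis: "diag_coeff (d3_basis f (a, b, c)) \<in> tensor_rel"
proof (cases "a + b + c = 0")
  case False
  then have "a + b + c \<noteq> 0" "a + c + b \<noteq> 0" "b + c + a \<noteq> 0"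
    by (simp_all add: algebra_simps)
  then have "diag_coeff (d3_basis f (a, b, c)) = 0"
    unfolding d3_basis_def prod.case diag_coeff_add diag_coeff_diff diag_coeff_smul diag_coeff_wedge2
    by simp
  then show ?thesis using tensor_rel_zero by simp
next
  case True
  then have c: "c = - (a + b)" by (metis add.commute add_eq_0_iff)
  have sums: "a + b = - c" "a + c = - b" "b + c = - a" by (simp_all add: c algebra_simps)
  have fac: "f a c = - f a b" and fbc: "f b c = f a b"
    using skew[of a b] by (simp_all add: c)
  let ?X = "(bvec (- a) - bvec a) + (bvec (- b) - bvec b) + (bvec (- c) - bvec c)"
  have "diag_coeff (d3_basis f (a, b, c)) = smul (- of_int (f a b)) ?X"
    unfolding d3_basis_def prod.case diag_coeff_add diag_coeff_diff diag_coeff_smul diag_coeff_wedge2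
      sums fac fbc
    by (simp add: fun_eq_iff algebra_simps)
  moreover have "?X = smul 2 (tensor_gen (a, b)) + smul 2 (tensor_gen (a + b, c)) - tensor_gen (0, 0)
      - tensor_gen (a, - a) - tensor_gen (b, - b) - tensor_gen (c, - c)"
    using True by (simp add: tensor_gen_def sums fun_eq_iff algebra_simps)
  then have "?X \<in> tensor_rel"
    by (simp only: tensor_rel_add tensor_rel_diff tensor_rel_smul_gen tensor_gen_in_tensor_rel)
  ultimately show ?thesis by (simp add: tensor_rel_smul)
qed

lemma diag_coeff_boundaries2:
  assumes "x \<in> boundaries2 f S"
  shows "diag_coeff x \<in> tensor_rel"
proof -
  obtain u where u: "x = d3 f u" "finite (supp u)"
    using assms unfolding boundaries2_def by (auto dest: chains3D(1))
  have "diag_coeff x = (\<Sum>p\<in>supp u. smul (u p / 6) (diag_coeff (d3_basis f p)))"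
    unfolding u d3_eq_sum[OF u(2) order.refl] by (simp add: fun_eq_iff diag_coeff_def sum_apply)
  also have "\<dots> \<in> tensor_rel"
    by (rule tensor_rel_sum, rule tensor_rel_smul) (metis diag_coeff_d3_basis prod_cases3)
  finally show ?thesis .
qed

end

section \<open>The isomorphism onto \<open>Q \<otimes> H\<close>\<close>

context nondegenerate_form
begin

text \<open>One of z, z + t, z + 2t, z + 3t works: each of the three integer sequences
  n \<mapsto> \<langle>p, z + n t\<rangle> (p = p1, p2, p3) vanishes at most once.\<close>
lemma nonorthogonal_step:
  assumes "f p1 z \<noteq> 0" "f p2 z \<noteq> 0" "f p3 t \<noteq> 0"
  shows "\<exists>z'. f p1 z' \<noteq> 0 \<and> f p2 z' \<noteq> 0 \<and> f p3 z' \<noteq> 0"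
proof -
  have "\<exists>n\<in>{0, 1, 2, 3 :: int}. f p1 z + n * f p1 t \<noteq> 0 \<and> f p2 z + n * f p2 t \<noteq> 0
      \<and> f p3 z + n * f p3 t \<noteq> 0"
    using assms by auto
  then show ?thesis
    by (auto intro: exI[of _ z] exI[of _ "z + t"] exI[of _ "z + t + t"] exI[of _ "z + t + t + t"])
qed

lemma exists_common_nonorthogonal:
  assumes "p1 \<noteq> 0" "p2 \<noteq> 0" "p3 \<noteq> 0"
  shows "\<exists>z. f p1 z \<noteq> 0 \<and> f p2 z \<noteq> 0 \<and> f p3 z \<noteq> 0"
proof -
  obtain z1 t2 t3 where "f p1 z1 \<noteq> 0" "f p2 t2 \<noteq> 0" "f p3 t3 \<noteq> 0"
    using assms nondegenerate by metis
  then obtain z2 where "f p1 z2 \<noteq> 0" "f p2 z2 \<noteq> 0" "f p3 t3 \<noteq> 0"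
    using nonorthogonal_step[of p1 z1 p1 p2 t2] by blast
  then show ?thesis
    by (rule nonorthogonal_step)
qed

text \<open>The relation comes from the boundary of [x]\<and>[y]\<and>[-(x+y)], a chain of weight 0.\<close>
lemma opp_wedge_add_nonorthogonal:
  assumes k: "f x y \<noteq> 0"
  shows "opp_wedge (x + y) - opp_wedge x - opp_wedge y \<in> boundaries2 f (H1 f)"
proof -
  have nz: "x \<noteq> 0" "y \<noteq> 0" "- (x + y) \<noteq> 0"
    using k by (auto simp: add_eq_0_iff)
  have weight0: "x + y + - (x + y) = 0" by simp
  have "d3_basis f (x, y, - (x + y))
      = smul (- of_int (f x y)) (opp_wedge (x + y) - opp_wedge x - opp_wedge y)"
    unfolding d3_basis_weight[OF weight0] weight_wedge_zero opp_wedge_uminus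
    by (simp add: skew[of x y] fun_eq_iff algebra_simps)
  moreover have "d3_basis f (x, y, - (x + y)) \<in> boundaries2 f (H1 f)"
    using nz by (simp add: d3_basis_in_boundaries2)
  ultimately show ?thesis
    using k by (metis boundaries2_smul_cancel neg_equal_0_iff_equal of_int_eq_0_iff)
qed

text \<open>For orthogonal x, y the relation is reduced to the previous case through an auxiliary z
  pairing nontrivially with x, y and x + y.\<close>
lemma opp_wedge_add: "opp_wedge (x + y) - opp_wedge x - opp_wedge y \<in> boundaries2 f (H1 f)"
proof -
  consider "x = 0" | "y = 0" | "x + y = 0" | "f x y \<noteq> 0"
    | "x \<noteq> 0" "y \<noteq> 0" "x + y \<noteq> 0" "f x y = 0"
    by blast
  then show ?thesis
  proof cases
    case 3
    then have "y = - x" by (simp add: add_eq_0_iff)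
    then show ?thesis by (simp add: opp_wedge_uminus boundaries2_zero)
  next
    case 4
    then show ?thesis by (rule opp_wedge_add_nonorthogonal)
  next
    case 5
    obtain z where z: "f x z \<noteq> 0" "f y z \<noteq> 0" "f (x + y) z \<noteq> 0"
      using exists_common_nonorthogonal[OF 5(1-3)] by blast
    have "f x (y + z) \<noteq> 0" using z(1) 5(4) by simp
    then have "(opp_wedge (x + (y + z)) - opp_wedge x - opp_wedge (y + z))
        + (opp_wedge (y + z) - opp_wedge y - opp_wedge z)
        - (opp_wedge (x + y + z) - opp_wedge (x + y) - opp_wedge z) \<in> boundaries2 f (H1 f)"
      using z by (intro boundaries2_add boundaries2_diff opp_wedge_add_nonorthogonal)
    then show ?thesis
      by (simp add: add.assoc algebra_simps)
  qed (simp_all add: boundaries2_zero)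
qed

lemma diag_chain_tensor_rel:
  assumes "g \<in> tensor_rel"
  shows "diag_chain g \<in> boundaries2 f (H1 f)"
proof -
  obtain F c where "g = (\<Sum>p\<in>F. smul (c p) (tensor_gen p))"
    using assms unfolding tensor_rel_iff by blast
  then have "diag_chain g = (\<Sum>p\<in>F. smul (c p) (diag_chain (tensor_gen p)))"
    by (simp add: diag_chain_sum diag_chain_smul)
  also have "\<dots> \<in> boundaries2 f (H1 f)"
    unfolding diag_chain_tensor_gen
    by (intro boundaries2_sum boundaries2_smul opp_wedge_add)
  finally show ?thesis .
qed

lemma diag_chain_cycles2:
  assumes g: "g \<in> QS UNIV"
  shows "diag_chain g \<in> cycles2 f (H1 f)"
proof -
  have on_antidiagonal: "snd q = - fst q" "g (fst q) \<noteq> g (snd q)" if "q \<in> supp (diag_chain g)" for q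
    using that by (auto simp: supp_def diag_chain_def add_eq_0_iff split: if_splits)
  have "supp (diag_chain g) \<subseteq> (\<lambda>a. (a, - a)) ` supp g \<union> (\<lambda>a. (- a, a)) ` supp g"
  proof
    fix q assume q: "q \<in> supp (diag_chain g)"
    then have "q = (fst q, - fst q)" "q = (- snd q, snd q)"
      using on_antidiagonal[OF q] by (simp_all add: prod_eq_iff)
    moreover have "fst q \<in> supp g \<or> snd q \<in> supp g"
      using on_antidiagonal(2)[OF q] by (auto simp: supp_def)
    ultimately show "q \<in> (\<lambda>a. (a, - a)) ` supp g \<union> (\<lambda>a. (- a, a)) ` supp g"
      by blast
  qed
  then have fin: "finite (supp (diag_chain g))"
    using g unfolding QS_def by (auto intro: finite_subset)
  have "diag_chain g \<in> chains2 (H1 f)"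
  proof (rule chains2I[OF fin])
    show "supp (diag_chain g) \<subseteq> H1 f \<times> H1 f"
      using on_antidiagonal by (fastforce simp: mem_Times_iff)
    fix x y
    show "diag_chain g (y, x) = - diag_chain g (x, y)"
      by (simp add: diag_chain_def add.commute[of y x] field_simps)
  qed
  moreover have "d2 f (diag_chain g) = 0"
    unfolding d2_def using on_antidiagonal(1) by (simp add: fun_eq_iff sum.neutral)
  ultimately show ?thesis
    unfolding cycles2_def by blast
qed

lemma weight_cycle_neg:
  assumes h: "h \<noteq> 0" and v: "f v h \<noteq> 0"
  shows "weight_cycle f h v (- v) \<in> boundaries2 f (H1 f)"
proof -
  have "v \<noteq> 0" using v by auto
  then have "smul (of_int (f h v)) (weight_cycle f h v (- v)) \<in> boundaries2 f (H1 f)"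
    using weight_cycle_cyclic[of v "- v" h h "H1 f" v] h by simp
  then show ?thesis
    by (rule boundaries2_smul_cancel[rotated]) (use v skew[of h v] in simp)
qed

text \<open>Two instances of the cyclic relation, for the triples (v, y, h - v - y) and
  (v + y, -v, h - y), eliminate weight_cycle f h v (v + y) and leave
  \<langle>v,h\<rangle>(2\<langle>v,y\<rangle> - \<langle>v,h\<rangle>) weight_cycle f h v y as a boundary.\<close>
lemma weight_cycle_in_boundaries2_generic:
  assumes h: "h \<noteq> 0" and v: "f v h \<noteq> 0" and y: "y \<noteq> 0" "y \<noteq> h"
    and generic: "2 * f v y \<noteq> f v h"
  shows "weight_cycle f h v y \<in> boundaries2 f (H1 f)"
proof -
  consider "y = h - v" | "y = - v" | "y \<noteq> h - v" "y \<noteq> - v" by blast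
  then show ?thesis
  proof cases
    case 1
    then show ?thesis using weight_cycle_anti[of h v v] boundaries2_zero by simp
  next
    case 2
    then show ?thesis using weight_cycle_neg[OF h v] by simp
  next
    case 3
    have v0: "v \<noteq> 0" using v by auto
    define m where "m = f v y"
    define g where "g = f v h"
    let ?P = "weight_cycle f h v y" and ?Q = "weight_cycle f h v (v + y)"
      and ?R = "weight_cycle f h v (- v)"
    have "smul (of_int (m - g)) ?P - smul (of_int m) ?Q
        = smul (of_int (f y (h - (v + y)))) (weight_cycle f h v v)
          + smul (of_int (f (h - (v + y)) v)) ?P
          + smul (of_int (f v y)) (weight_cycle f h v (h - (v + y)))"
      unfolding weight_cycle_anti weight_cycle_self
      by (simp add: m_def g_def skew[of h v] skew[of y v] fun_eq_iff algebra_simps)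
    also have "\<dots> \<in> boundaries2 f (H1 f)"
      by (rule weight_cycle_cyclic) (use v0 y 3 in \<open>auto simp: algebra_simps\<close>)
    finally have T1: "smul (of_int (m - g)) ?P - smul (of_int m) ?Q \<in> boundaries2 f (H1 f)" .
    have "smul (of_int (g - m)) ?Q + smul (of_int m) ?P
        = (smul (of_int (f (v + y) (h - y))) ?R + smul (of_int (f (h - y) (- v))) ?Q
          + smul (of_int (f (- v) (v + y))) (weight_cycle f h v (h - y)))
          - smul (of_int (f (v + y) (h - y))) ?R"
      unfolding weight_cycle_anti
      by (simp add: m_def g_def skew[of h v] skew[of y v] fun_eq_iff algebra_simps)
    also have "\<dots> \<in> boundaries2 f (H1 f)"
      by (intro boundaries2_diff boundaries2_smul weight_cycle_neg[OF h v] weight_cycle_cyclic)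
        (use v0 y 3 in \<open>auto simp: add_eq_0_iff\<close>)
    finally have T2: "smul (of_int (g - m)) ?Q + smul (of_int m) ?P \<in> boundaries2 f (H1 f)" .
    have "smul (of_int (g - m)) (smul (of_int (m - g)) ?P - smul (of_int m) ?Q)
        + smul (of_int m) (smul (of_int (g - m)) ?Q + smul (of_int m) ?P)
        = smul (of_int (g * (2 * m - g))) ?P"
      by (simp add: fun_eq_iff algebra_simps)
    then have "smul (of_int (g * (2 * m - g))) ?P \<in> boundaries2 f (H1 f)"
      using T1 T2 by (metis boundaries2_add boundaries2_smul)
    then show ?thesis
      by (rule boundaries2_smul_cancel[rotated]) (use v generic in \<open>simp add: m_def g_def\<close>)
  qed
qed

lemma weight_cycle_change_base:
  "smul (of_int (f w h)) (weight_cycle f h u y)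
     = smul (of_int (f u h)) (weight_cycle f h w y) + smul (of_int (f y h)) (weight_cycle f h u w)"
  by (simp add: weight_cycle_def fun_eq_iff algebra_simps)

lemma weight_cycle_in_boundaries2:
  assumes h: "h \<noteq> 0" and u: "f u h \<noteq> 0" and y: "y \<noteq> 0" "y \<noteq> h"
  shows "weight_cycle f h u y \<in> boundaries2 f (H1 f)"
proof -
  consider "2 * f u y \<noteq> f u h" | "y + y = h" | "2 * f u y = f u h" "y + y \<noteq> h"
    by blast
  then show ?thesis
  proof cases
    case 1
    then show ?thesis by (rule weight_cycle_in_boundaries2_generic[OF h u y])
  next
    case 2
    then have "h - y = y" "f y h = 0"
      by (auto simp: algebra_simps)
    then show ?thesis
      by (simp add: weight_cycle_def weight_wedge_def boundaries2_zero)
  next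
    case 3
    let ?q = "y + y - h"
    have "?q \<noteq> 0" using 3(2) by (auto simp: algebra_simps)
    then obtain z where "f h z \<noteq> 0" "f ?q z \<noteq> 0"
      using exists_common_nonorthogonal[OF h _ h] by blast
    then have z: "f z h \<noteq> 0" "f z ?q \<noteq> 0"
      using skew neg_equal_0_iff_equal by metis+
    text \<open>A base w for which both w and y are generic.\<close>
    obtain w where w: "f w h \<noteq> 0" "2 * f u w \<noteq> f u h" "f w ?q \<noteq> 0"
    proof (cases "2 * f u z = f u h")
      case True
      have "f (z + z) h \<noteq> 0" "f (z + z) ?q \<noteq> 0"
        using z by (simp_all only: bilinear_left)
      moreover have "2 * f u (z + z) \<noteq> f u h"
        using u True by (simp only: bilinear_right) arith
      ultimately show ?thesis by (intro that)
    next
      case False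
      then show ?thesis using z by (intro that) simp_all
    qed
    have "w \<noteq> 0" "w \<noteq> h" using w(1) by auto
    then have uw: "weight_cycle f h u w \<in> boundaries2 f (H1 f)"
      by (rule weight_cycle_in_boundaries2_generic[OF h u _ _ w(2)])
    have "2 * f w y \<noteq> f w h" using w(3) by (simp only: diff_right bilinear_right)
    then have wy: "weight_cycle f h w y \<in> boundaries2 f (H1 f)"
      by (rule weight_cycle_in_boundaries2_generic[OF h w(1) y])
    have "smul (of_int (f w h)) (weight_cycle f h u y) \<in> boundaries2 f (H1 f)"
      by (subst weight_cycle_change_base, rule boundaries2_add; rule boundaries2_smul)
        (fact wy, fact uw)
    then show ?thesis
      by (rule boundaries2_smul_cancel[rotated]) (use w(1) in simp)
  qed
qed

text \<open>Each [x]\<and>[y] is rewritten through a weight cycle with a fixed base U h, h = x + y;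
  the remainders are multiples of [U h]\<and>[h - U h] whose coefficients vanish for a cycle.\<close>
lemma offdiag_cycle_in_boundaries2:
  assumes w: "w \<in> cycles2 f (H1 f)" and off: "\<And>p. p \<in> supp w \<Longrightarrow> fst p + snd p \<noteq> 0"
  shows "w \<in> boundaries2 f (H1 f)"
proof -
  have wc: "w \<in> chains2 (H1 f)" and cycle: "d2 f w = 0"
    using w by (auto simp: cycles2_def)
  let ?s = "\<lambda>p. fst p + snd p"
  define U where "U h = (SOME u. f u h \<noteq> 0)" for h
  have U: "f (U h) h \<noteq> 0" if "h \<noteq> 0" for h
    unfolding U_def by (rule someI_ex) (use exists_pairing_nonzero[OF that] in blast)
  define c where "c p = w p / 2 / of_int (f (U (?s p)) (?s p))" for p
  define V where "V h = smul (1 / (2 * of_int (f (U h) h))) (weight_wedge h (U h))" for h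
  have decomp: "smul (w p / 2) (wedge2 (fst p) (snd p))
      = smul (c p) (weight_cycle f (?s p) (U (?s p)) (fst p))
        + smul (w p * of_int (f (fst p) (snd p))) (V (?s p))" if "p \<in> supp w" for p
  proof -
    have "wedge2 (fst p) (snd p) = weight_wedge (?s p) (fst p)"
      by (simp add: weight_wedge_def)
    moreover have "f (fst p) (?s p) = f (fst p) (snd p)"
      by simp
    ultimately show ?thesis
      unfolding weight_wedge_decompose[where f = f and t = "fst p", OF U[OF off[OF that]]]
      using U[OF off[OF that]]
      by (simp del: bilinear_left bilinear_right add: c_def V_def fun_eq_iff field_simps)
  qed
  have "w = (\<Sum>p\<in>supp w. smul (c p) (weight_cycle f (?s p) (U (?s p)) (fst p)))
      + (\<Sum>p\<in>supp w. smul (w p * of_int (f (fst p) (snd p))) (V (?s p)))"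
    by (subst chains2_eq_sum_wedge2[OF wc]) (simp add: decomp sum.distrib[symmetric] cong: sum.cong)
  also have "\<dots> = (\<Sum>p\<in>supp w. smul (c p) (weight_cycle f (?s p) (U (?s p)) (fst p)))"
    using cycle_weighted_sum_zero[OF chains2D(1)[OF wc] cycle] by simp
  also have "\<dots> \<in> boundaries2 f (H1 f)"
  proof (rule boundaries2_sum, rule boundaries2_smul)
    fix p assume p: "p \<in> supp w"
    then have "fst p \<noteq> 0" "snd p \<noteq> 0"
      using chains2D(2)[OF wc] by auto
    then show "weight_cycle f (?s p) (U (?s p)) (fst p) \<in> boundaries2 f (H1 f)"
      using off[OF p] U[OF off[OF p]] by (intro weight_cycle_in_boundaries2) auto
  qed
  finally show ?thesis .
qed

lemma diag_coeff_kernel: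
  assumes w: "w \<in> cycles2 f (H1 f)" and "diag_coeff w \<in> tensor_rel"
  shows "w \<in> boundaries2 f (H1 f)"
proof -
  have wc: "w \<in> chains2 (H1 f)"
    using w by (simp add: cycles2_def)
  let ?diag = "\<lambda>q. if fst q + snd q = 0 then w q else 0"
  let ?off = "\<lambda>q. if fst q + snd q \<noteq> 0 then w q else 0"
  have diag: "?diag \<in> boundaries2 f (H1 f)"
    using diag_chain_tensor_rel[OF assms(2)] by (simp add: diag_chain_diag_coeff[OF wc])
  have "?off \<in> chains2 (H1 f)"
    by (rule chains2_restrict[OF wc]) (simp add: add.commute)
  moreover have "d2 f ?off = d2 f w"
    by (rule d2_restrict[OF chains2D(1)[OF wc]]) (simp add: add_eq_0_iff)
  ultimately have "?off \<in> cycles2 f (H1 f)"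
    using w unfolding cycles2_def by simp
  then have off: "?off \<in> boundaries2 f (H1 f)"
    by (rule offdiag_cycle_in_boundaries2) (simp add: supp_def split: if_splits)
  have "w = ?diag + ?off"
    by (simp add: fun_eq_iff)
  then show ?thesis
    using boundaries2_add[OF diag off] by simp
qed

lemma diag_coeff_induces_iso:
  "induces_iso diag_coeff (cycles2 f (H1 f)) (boundaries2 f (H1 f)) (QS UNIV) tensor_rel"
  unfolding induces_iso_def
proof (intro conjI ballI allI impI)
  fix y :: "'a \<Rightarrow> rat" assume "y \<in> QS UNIV"
  then show "\<exists>x\<in>cycles2 f (H1 f). y - diag_coeff x \<in> tensor_rel"
    using diag_chain_cycles2 diag_coeff_diag_chain by blast
qed (auto simp: cycles2_def diag_coeff_chains2 diag_coeff_boundaries2 diag_coeff_add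
    diag_coeff_kernel, simp add: diag_coeff_def)

end

theorem corollary4p2:
  fixes f :: "'a::ab_group_add \<Rightarrow> 'a \<Rightarrow> int"
  assumes bilin_l: "\<forall>x y z. f (x + y) z = f x z + f y z"
    and bilin_r: "\<forall>x y z. f x (y + z) = f x y + f x z"
    and alt: "\<forall>x. f x x = 0"
    and nondeg: "\<forall>x. (\<forall>y. f x y = 0) \<longrightarrow> x = 0"
  shows "induces_iso (proj2 (H1 f)) (cycles2 f UNIV) (boundaries2 f UNIV)
           (cycles2 f (H1 f)) (boundaries2 f (H1 f))
       \<and> (\<exists>\<phi> :: ('a \<times> 'a \<Rightarrow> rat) \<Rightarrow> ('a \<Rightarrow> rat). induces_iso \<phi> (cycles2 f (H1 f)) (boundaries2 f (H1 f))
                 (QS UNIV) tensor_rel)"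
proof -
  interpret nondegenerate_form f
    by unfold_locales (use bilin_l bilin_r alt nondeg in blast)+
  show ?thesis
    using proj2_induces_iso diag_coeff_induces_iso by blast
qed

end
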